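(* $P_n$ has exactly one matching ordering for $n=1$, exactly three matching orderings for $n=3$ and $n=4$, and exactly two matching orderings for every other $n\ge 2$.
   Context: A tournament is a finite, non-null, loopless directed graph in which for any two distinct vertices $u,v$ there is exactly one edge with both ends in $\{u,v\}$; write $u\to v$ for the edge from $u$ to $v$. Given an ordering $v_1,\dots,v_n$ of the vertices, a backedge is an edge $v_j\to v_i$ with $j>i$; the ordering is a matching ordering if every vertex is the head or tail of at most one backedge. $P_n$ is the tournament on $v_1,\dots,v_n$ with $v_i\to v_j$ if $j-i\ge2$ and $v_{i+1}\to v_i$ for $1\le i\le n-1$. *)

theory Defs
  imports Main
begin

definition is_tournament :: "'a set \<Rightarrow> ('a \<Rightarrow> 'a \<Rightarrow> bool) \<Rightarrow> bool" where
  "is_tournament V T \<longleftrightarrow> finite V \<and> V \<noteq> {} \<and>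
     (\<forall>u v. T u v \<longrightarrow> u \<in> V \<and> v \<in> V) \<and> (\<forall>v. \<not> T v v) \<and>
     (\<forall>u\<in>V. \<forall>v\<in>V. u \<noteq> v \<longrightarrow> (T u v \<longleftrightarrow> \<not> T v u))"

definition is_ordering :: "'a set \<Rightarrow> 'a list \<Rightarrow> bool" where
  "is_ordering V xs \<longleftrightarrow> distinct xs \<and> set xs = V"

definition backedges :: "('a \<Rightarrow> 'a \<Rightarrow> bool) \<Rightarrow> 'a list \<Rightarrow> ('a \<times> 'a) set" where
  "backedges T xs = {(xs ! j, xs ! i) | i j. i < j \<and> j < length xs \<and> T (xs ! j) (xs ! i)}"

definition matching_ordering :: "'a set \<Rightarrow> ('a \<Rightarrow> 'a \<Rightarrow> bool) \<Rightarrow> 'a list \<Rightarrow> bool" where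
  "matching_ordering V T xs \<longleftrightarrow> is_ordering V xs \<and>
     (\<forall>v\<in>V. card {e \<in> backedges T xs. fst e = v \<or> snd e = v} \<le> 1)"

definition P_tour :: "nat \<Rightarrow> nat \<Rightarrow> nat \<Rightarrow> bool" where
  "P_tour n i j \<longleftrightarrow> i \<in> {1..n} \<and> j \<in> {1..n} \<and> (i + 2 \<le> j \<or> i = j + 1)"

definition num_matching_orderings :: "nat \<Rightarrow> nat" where
  "num_matching_orderings n = card {xs. matching_ordering {1..n} (P_tour n) xs}"

end

theory Submission
  imports Defs
begin

text \<open>
  In a matching ordering no backedge u \<rightarrow> v can be bridged by a path u \<rightarrow> w \<rightarrow> v: whether w
  comes before u or after it, a second backedge at u or at v appears.  In P_n a backedge u \<rightarrow> v
  between non-consecutive vertices is bridged by u - 1, by v + 1 or by 3 unless it is 1 \<rightarrow> n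
  with n \<le> 4.  Apart from that exception all backedges join consecutive vertices, and for
  each i the pairs {i, i+1} and {i+1, i+2} cannot both be backedges (they share i+1) nor both
  be reversed (i precedes i+2).  Hence the reversed consecutive pairs alternate, and the ordering
  is fixed by whether 2 precedes 1.  For n = 3, 4 the backedge 1 \<rightarrow> n determines one more
  ordering, [3, 2, 1] resp. [2, 4, 1, 3].
\<close>

definition precedes :: "'a list \<Rightarrow> 'a \<Rightarrow> 'a \<Rightarrow> bool" where
  "precedes xs u v \<longleftrightarrow> (\<exists>i j. i < j \<and> j < length xs \<and> xs ! i = u \<and> xs ! j = v)"

lemma precedes_Nil [simp]: "\<not> precedes [] u v"
  by (simp add: precedes_def)

lemma precedes_Cons [simp]:
  "precedes (x # xs) u v \<longleftrightarrow> (x = u \<and> v \<in> set xs) \<or> precedes xs u v"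
proof
  assume "precedes (x # xs) u v"
  then obtain i j where "i < j" "j < Suc (length xs)" "(x # xs) ! i = u" "(x # xs) ! j = v"
    by (auto simp: precedes_def)
  then show "(x = u \<and> v \<in> set xs) \<or> precedes xs u v"
    unfolding precedes_def by (cases i; cases j) auto
next
  assume "(x = u \<and> v \<in> set xs) \<or> precedes xs u v"
  then show "precedes (x # xs) u v"
    unfolding precedes_def in_set_conv_nth
    by (metis Suc_mono length_Cons nth_Cons_0 nth_Cons_Suc zero_less_Suc)
qed

lemma precedes_asym: "distinct xs \<Longrightarrow> precedes xs u v \<Longrightarrow> \<not> precedes xs v u"
  unfolding precedes_def by (metis nth_eq_iff_index_eq order.strict_trans not_less_iff_gr_or_eq)

lemma precedes_trans: "distinct xs \<Longrightarrow> precedes xs u v \<Longrightarrow> precedes xs v w \<Longrightarrow> precedes xs u w"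
  unfolding precedes_def by (metis nth_eq_iff_index_eq order.strict_trans)

lemma precedes_total:
  "u \<in> set xs \<Longrightarrow> v \<in> set xs \<Longrightarrow> u \<noteq> v \<Longrightarrow> precedes xs u v \<or> precedes xs v u"
  unfolding precedes_def in_set_conv_nth by (metis linorder_neqE_nat)

lemma precedes_if_sorted_wrt: "sorted_wrt R xs \<Longrightarrow> precedes xs u v \<Longrightarrow> R u v"
  unfolding precedes_def sorted_wrt_iff_nth_less by blast

lemma sorted_wrt_precedes: "sorted_wrt (precedes xs) xs"
  unfolding sorted_wrt_iff_nth_less precedes_def by blast

lemma sorted_wrt_asymp_unique:
  assumes "asymp R" "sorted_wrt R xs" "sorted_wrt R ys" "set xs = set ys"
  shows "xs = ys"
  using assms(2-4)
proof (induction xs arbitrary: ys)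
  case Nil
  then show ?case by simp
next
  case (Cons x xs)
  then obtain y ys' where ys: "ys = y # ys'"
    by (cases ys) auto
  have "x = y"
  proof (rule ccontr)
    assume "x \<noteq> y"
    then have "R x y" "R y x"
      using Cons.prems ys by auto
    then show False
      using assms(1) by (meson asympD)
  qed
  moreover have "x \<notin> set xs" "y \<notin> set ys'"
    using Cons.prems ys assms(1) by (auto dest: asympD)
  ultimately show ?case
    using Cons ys by (metis insert_ident list.set(2) sorted_wrt.simps(2))
qed

lemma eq_if_sorted_wrt_precedes:
  assumes "distinct xs" "set ys = set xs" "sorted_wrt (precedes xs) ys"
  shows "ys = xs"
  using sorted_wrt_asymp_unique[of "precedes xs"] assms sorted_wrt_precedes precedes_asym
  by (metis asympI)

lemma eq_sort_key_if_precedes: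
  assumes "distinct xs" "distinct ys" "set ys = set xs"
    and "\<And>u v. u \<in> set xs \<Longrightarrow> v \<in> set xs \<Longrightarrow> u \<noteq> v \<Longrightarrow> k u \<le> k v \<Longrightarrow> precedes xs u v"
  shows "xs = sort_key k ys"
proof -
  have "sorted_wrt (\<lambda>u v. u \<noteq> v \<and> k u \<le> k v) (sort_key k ys)"
    using sorted_sort_key[of k ys] distinct_sort[of k ys] assms(2)
    by (auto simp: sorted_wrt_iff_nth_less sorted_iff_nth_mono nth_eq_iff_index_eq)
  then have "sorted_wrt (precedes xs) (sort_key k ys)"
    by (rule sorted_wrt_mono_rel[rotated]) (use assms(3,4) in auto)
  then show ?thesis
    using eq_if_sorted_wrt_precedes assms(1,3) by (metis set_sort)
qed

definition vertex_disjoint :: "('a \<times> 'a) set \<Rightarrow> bool" where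
  "vertex_disjoint E \<longleftrightarrow>
     (\<forall>e\<in>E. \<forall>e'\<in>E. \<forall>v. v \<in> {fst e, snd e} \<longrightarrow> v \<in> {fst e', snd e'} \<longrightarrow> e = e')"

lemma vertex_disjoint_subset: "vertex_disjoint E \<Longrightarrow> F \<subseteq> E \<Longrightarrow> vertex_disjoint F"
  unfolding vertex_disjoint_def by blast

lemma vertex_disjoint_consecutive_pairs:
  assumes "\<And>b. Q b \<Longrightarrow> \<not> Q (Suc b)"
  shows "vertex_disjoint {(Suc b, b) | b. Q b}"
  using assms unfolding vertex_disjoint_def by auto

lemma backedge_iff: "(a, b) \<in> backedges T xs \<longleftrightarrow> precedes xs b a \<and> T a b"
  unfolding backedges_def precedes_def by blast

lemma backedges_subset: "backedges T xs \<subseteq> set xs \<times> set xs"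
  by (auto simp: backedges_def)

lemma precedes_sort_key: "precedes (sort_key k ys) u v \<Longrightarrow> k u \<le> k v"
  using precedes_if_sorted_wrt[OF sorted_sort_key[of k ys, unfolded sorted_map]] .

lemma backedges_sort_key_subset: "backedges T (sort_key k ys) \<subseteq> {(a, b). T a b \<and> k b \<le> k a}"
  using precedes_sort_key by (auto simp: backedge_iff)

lemma matching_ordering_iff:
  "matching_ordering V T xs \<longleftrightarrow> is_ordering V xs \<and> vertex_disjoint (backedges T xs)"
proof -
  let ?touching = "\<lambda>v. {e \<in> backedges T xs. fst e = v \<or> snd e = v}"
  let ?single = "\<lambda>v. \<forall>e\<in>?touching v. \<forall>e'\<in>?touching v. e = e'"
  have "finite (backedges T xs)"
    using backedges_subset by (rule finite_subset) simp
  then have card_iff: "card (?touching v) \<le> 1 \<longleftrightarrow> ?single v" for v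
    using card_le_Suc0_iff_eq[of "?touching v"] by simp
  have disjoint_iff: "vertex_disjoint (backedges T xs) \<longleftrightarrow> (\<forall>v. ?single v)"
    unfolding vertex_disjoint_def by blast
  have "?single v" if "v \<notin> set xs" for v
    using that backedges_subset by fastforce
  then have "(\<forall>v\<in>set xs. ?single v) \<longleftrightarrow> (\<forall>v. ?single v)"
    by blast
  then show ?thesis
    unfolding matching_ordering_def is_ordering_def card_iff disjoint_iff by blast
qed

lemma matching_orderingI:
  assumes "is_ordering V xs" "backedges T xs \<subseteq> B" "vertex_disjoint B"
  shows "matching_ordering V T xs"
  using assms vertex_disjoint_subset by (auto simp: matching_ordering_iff)

lemma matching_ordering_sort_keyI:
  assumes "distinct ys" "set ys = V"
    and "\<And>a b. T a b \<Longrightarrow> k b \<le> k a \<Longrightarrow> (a, b) \<in> B" and "vertex_disjoint B"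
  shows "matching_ordering V T (sort_key k ys)"
proof (rule matching_orderingI)
  show "is_ordering V (sort_key k ys)"
    using assms(1,2) by (simp add: is_ordering_def)
  show "backedges T (sort_key k ys) \<subseteq> B"
    using backedges_sort_key_subset assms(3) by blast
qed (fact assms(4))

lemma matching_ordering_backedges_eq:
  assumes "matching_ordering V T xs" "(a, b) \<in> backedges T xs" "(c, d) \<in> backedges T xs"
    and "w \<in> {a, b}" "w \<in> {c, d}"
  shows "a = c \<and> b = d"
proof -
  have "vertex_disjoint (backedges T xs)"
    using assms(1) by (simp add: matching_ordering_iff)
  from this[unfolded vertex_disjoint_def, rule_format, OF assms(2,3), of w] assms(4,5)
  show ?thesis
    by simp
qed

lemma matching_ordering_no_two_path:
  assumes M: "matching_ordering V T xs" and "irreflp T"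
    and ab: "(a, b) \<in> backedges T xs" and "w \<in> V" "T a w" "T w b"
  shows False
proof -
  have D: "distinct xs" and "set xs = V"
    using M by (auto simp: matching_ordering_def is_ordering_def)
  have "w \<noteq> a" "w \<noteq> b" "a \<in> set xs"
    using \<open>irreflp T\<close> \<open>T a w\<close> \<open>T w b\<close> ab backedges_subset by (auto dest: irreflpD)
  then consider "precedes xs w a" | "precedes xs a w"
    using precedes_total[of w xs a] \<open>w \<in> V\<close> \<open>set xs = V\<close> by blast
  then show False
  proof cases
    case 1
    then have "(a, w) \<in> backedges T xs"
      using \<open>T a w\<close> by (simp add: backedge_iff)
    then show False
      using matching_ordering_backedges_eq[OF M ab, of a w a] \<open>w \<noteq> b\<close> by simp
  next
    case 2
    then have "(w, b) \<in> backedges T xs"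
      using ab \<open>T w b\<close> precedes_trans[OF D] by (auto simp: backedge_iff)
    then show False
      using matching_ordering_backedges_eq[OF M ab, of w b b] \<open>w \<noteq> a\<close> by simp
  qed
qed

lemma irreflp_P_tour: "irreflp (P_tour n)"
  by (auto simp: irreflp_def P_tour_def)

lemma long_backedge_P_tour:
  assumes M: "matching_ordering {1..n} (P_tour n) xs"
    and uv: "1 \<le> u" "u + 2 \<le> v" "v \<le> n" and "precedes xs v u"
  shows "u = 1 \<and> v = n \<and> n \<le> 4"
proof -
  have uv_back: "(u, v) \<in> backedges (P_tour n) xs"
    using uv \<open>precedes xs v u\<close> by (simp add: backedge_iff P_tour_def)
  note no_two_path = matching_ordering_no_two_path[OF M irreflp_P_tour uv_back]
  have "u = 1"
    using no_two_path[of "u - 1"] uv unfolding P_tour_def by (cases "u = 1") (simp_all, linarith)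
  moreover have "v = n"
    using no_two_path[of "v + 1"] uv by (cases "v = n") (auto simp: P_tour_def)
  moreover have "n \<le> 4"
    using no_two_path[of 3] uv \<open>u = 1\<close> \<open>v = n\<close> by (cases "n \<le> 4") (auto simp: P_tour_def)
  ultimately show ?thesis
    by blast
qed

definition long_edges_forward :: "nat \<Rightarrow> nat list \<Rightarrow> bool" where
  "long_edges_forward n xs \<longleftrightarrow> (\<forall>u v. 1 \<le> u \<longrightarrow> u + 2 \<le> v \<longrightarrow> v \<le> n \<longrightarrow> precedes xs u v)"

lemma long_edges_forward_P_tour:
  assumes M: "matching_ordering {1..n} (P_tour n) xs"
    and n: "(n \<noteq> 3 \<and> n \<noteq> 4) \<or> \<not> precedes xs n 1"
  shows "long_edges_forward n xs"
  unfolding long_edges_forward_def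
proof (intro allI impI)
  fix u v
  assume uv: "1 \<le> u" "u + 2 \<le> v" "v \<le> n"
  have "set xs = {1..n}"
    using M by (simp add: matching_ordering_def is_ordering_def)
  moreover have "\<not> precedes xs v u"
    using long_backedge_P_tour[OF M uv] n uv by auto
  ultimately show "precedes xs u v"
    using precedes_total[of u xs v] uv by auto
qed

lemma adjacent_backedges_alternate:
  assumes M: "matching_ordering {1..n} (P_tour n) xs" and F: "long_edges_forward n xs"
    and u: "1 \<le> u" "u + 2 \<le> n"
  shows "precedes xs (u + 1) u \<longleftrightarrow> \<not> precedes xs (u + 2) (u + 1)"
proof -
  have D: "distinct xs" and S: "set xs = {1..n}"
    using M by (auto simp: matching_ordering_def is_ordering_def)
  have "precedes xs u (u + 2)"
    using F u by (simp add: long_edges_forward_def)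
  then have "\<not> (precedes xs (u + 1) u \<and> precedes xs (u + 2) (u + 1))"
    using precedes_asym[OF D] precedes_trans[OF D] by blast
  moreover have "\<not> (precedes xs u (u + 1) \<and> precedes xs (u + 1) (u + 2))"
  proof
    assume "precedes xs u (u + 1) \<and> precedes xs (u + 1) (u + 2)"
    then have "(u + 1, u) \<in> backedges (P_tour n) xs" "(u + 2, u + 1) \<in> backedges (P_tour n) xs"
      using u by (auto simp: backedge_iff P_tour_def)
    from matching_ordering_backedges_eq[OF M this, of "u + 1"] show False
      by simp
  qed
  moreover have "precedes xs u (u + 1) \<or> precedes xs (u + 1) u"
    "precedes xs (u + 1) (u + 2) \<or> precedes xs (u + 2) (u + 1)"
    using precedes_total[of _ xs] S u by simp_all
  ultimately show ?thesis
    by blast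
qed

lemma adjacent_backedge_parity:
  assumes M: "matching_ordering {1..n} (P_tour n) xs" and F: "long_edges_forward n xs"
    and u: "1 \<le> u" "u + 1 \<le> n"
  shows "precedes xs (u + 1) u \<longleftrightarrow> (precedes xs 2 1 \<longleftrightarrow> odd u)"
  using u
proof (induction u rule: nat_induct_at_least)
  case base
  then show ?case
    by (simp add: numeral_2_eq_2)
next
  case (Suc u)
  then show ?case
    using adjacent_backedges_alternate[OF M F, of u] by auto
qed

text \<open>Sorting by these keys gives \<open>swap_even_pairs n\<close> = [1, 3, 2, 5, 4, ...] and
  \<open>swap_odd_pairs n\<close> = [2, 1, 4, 3, ...], i.e. P_n read with the pairs {2k, 2k+1}, resp. {2k-1, 2k},
  reversed (an unpaired last vertex stays last).\<close>

definition swap_even_key :: "nat \<Rightarrow> nat" where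
  "swap_even_key v = (if v = 1 then 1 else if even v then v + 1 else v - 1)"

definition swap_odd_key :: "nat \<Rightarrow> nat" where
  "swap_odd_key v = (if odd v then v + 1 else v - 1)"

definition swap_even_pairs :: "nat \<Rightarrow> nat list" where
  "swap_even_pairs n = sort_key swap_even_key [1..<n + 1]"

definition swap_odd_pairs :: "nat \<Rightarrow> nat list" where
  "swap_odd_pairs n = sort_key swap_odd_key [1..<n + 1]"

lemma swap_even_key_le_cases:
  "1 \<le> u \<Longrightarrow> 1 \<le> v \<Longrightarrow> u \<noteq> v \<Longrightarrow> swap_even_key u \<le> swap_even_key v \<Longrightarrow>
    u + 2 \<le> v \<or> (v = u + 1 \<and> odd u) \<or> (u = v + 1 \<and> even v)"
  unfolding swap_even_key_def by (auto split: if_splits) presburger+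

lemma swap_odd_key_le_cases:
  "1 \<le> u \<Longrightarrow> 1 \<le> v \<Longrightarrow> u \<noteq> v \<Longrightarrow> swap_odd_key u \<le> swap_odd_key v \<Longrightarrow>
    u + 2 \<le> v \<or> (v = u + 1 \<and> even u) \<or> (u = v + 1 \<and> odd v)"
  unfolding swap_odd_key_def by (auto split: if_splits) presburger+

lemma matching_ordering_swap_even_pairs:
  "matching_ordering {1..n} (P_tour n) (swap_even_pairs n)"
  unfolding swap_even_pairs_def
proof (rule matching_ordering_sort_keyI)
  show "(a, b) \<in> {(Suc b, b) | b. odd b}"
    if "P_tour n a b" "swap_even_key b \<le> swap_even_key a" for a b
    using that swap_even_key_le_cases[of b a] by (auto simp: P_tour_def)
qed (auto intro: vertex_disjoint_consecutive_pairs)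

lemma matching_ordering_swap_odd_pairs:
  "matching_ordering {1..n} (P_tour n) (swap_odd_pairs n)"
  unfolding swap_odd_pairs_def
proof (rule matching_ordering_sort_keyI)
  show "(a, b) \<in> {(Suc b, b) | b. even b}"
    if "P_tour n a b" "swap_odd_key b \<le> swap_odd_key a" for a b
    using that swap_odd_key_le_cases[of b a] by (auto simp: P_tour_def)
qed (auto intro: vertex_disjoint_consecutive_pairs)

lemma precedes_by_parity:
  assumes M: "matching_ordering {1..n} (P_tour n) xs" and F: "long_edges_forward n xs"
    and uv: "u \<in> {1..n}" "v \<in> {1..n}"
    and "u + 2 \<le> v \<or> (v = u + 1 \<and> (precedes xs 2 1 \<longleftrightarrow> even u)) \<or>
      (u = v + 1 \<and> (precedes xs 2 1 \<longleftrightarrow> odd v))"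
  shows "precedes xs u v"
  using assms(5)
proof (elim disjE conjE)
  assume "u + 2 \<le> v"
  then show ?thesis
    using F uv by (simp add: long_edges_forward_def)
next
  assume "v = u + 1" "precedes xs 2 1 \<longleftrightarrow> even u"
  moreover have "set xs = {1..n}"
    using M by (simp add: matching_ordering_def is_ordering_def)
  ultimately show ?thesis
    using adjacent_backedge_parity[OF M F, of u] precedes_total[of u xs v] uv by auto
next
  assume "u = v + 1" "precedes xs 2 1 \<longleftrightarrow> odd v"
  then show ?thesis
    using adjacent_backedge_parity[OF M F, of v] uv by auto
qed

lemma P_tour_ordering_eq_swap_pairs:
  assumes M: "matching_ordering {1..n} (P_tour n) xs" and F: "long_edges_forward n xs"
  shows "xs = (if precedes xs 2 1 then swap_odd_pairs n else swap_even_pairs n)"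
proof -
  have D: "distinct xs" and S: "set xs = {1..n}"
    using M by (auto simp: matching_ordering_def is_ordering_def)
  note forward = precedes_by_parity[OF M F]
  show ?thesis
  proof (cases "precedes xs 2 1")
    case True
    have "xs = swap_odd_pairs n"
      unfolding swap_odd_pairs_def
    proof (rule eq_sort_key_if_precedes[OF D])
      fix u v
      assume "u \<in> set xs" "v \<in> set xs" "u \<noteq> v" "swap_odd_key u \<le> swap_odd_key v"
      moreover from this have "u + 2 \<le> v \<or> (v = u + 1 \<and> even u) \<or> (u = v + 1 \<and> odd v)"
        using swap_odd_key_le_cases S by simp
      ultimately show "precedes xs u v"
        using forward[of u v] True S by simp
    qed (simp_all add: S atLeastLessThanSuc_atLeastAtMost del: upt_Suc)
    with True show ?thesis
      by simp
  next
    case False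
    have "xs = swap_even_pairs n"
      unfolding swap_even_pairs_def
    proof (rule eq_sort_key_if_precedes[OF D])
      fix u v
      assume "u \<in> set xs" "v \<in> set xs" "u \<noteq> v" "swap_even_key u \<le> swap_even_key v"
      moreover from this have "u + 2 \<le> v \<or> (v = u + 1 \<and> odd u) \<or> (u = v + 1 \<and> even v)"
        using swap_even_key_le_cases S by simp
      ultimately show "precedes xs u v"
        using forward[of u v] False S by simp
    qed (simp_all add: S atLeastLessThanSuc_atLeastAtMost del: upt_Suc)
    with False show ?thesis
      by simp
  qed
qed

lemma swap_even_pairs_ne_swap_odd_pairs:
  assumes "2 \<le> n"
  shows "swap_even_pairs n \<noteq> swap_odd_pairs n"
proof -
  have "\<not> precedes (swap_odd_pairs n) 1 2"
    using precedes_sort_key[of swap_odd_key _ 1 2] by (auto simp: swap_odd_pairs_def swap_odd_key_def)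
  moreover have "1 \<in> set (swap_odd_pairs n)" "2 \<in> set (swap_odd_pairs n)"
    using assms by (simp_all add: swap_odd_pairs_def atLeastLessThanSuc_atLeastAtMost del: upt_Suc)
  ultimately have "precedes (swap_odd_pairs n) 2 1"
    using precedes_total[of 2 "swap_odd_pairs n" 1] by auto
  moreover have "\<not> precedes (swap_even_pairs n) 2 1"
    using precedes_sort_key[of swap_even_key _ 2 1] by (auto simp: swap_even_pairs_def swap_even_key_def)
  ultimately show ?thesis
    by metis
qed

lemma matching_ordering_P_tour_cases:
  assumes "matching_ordering {1..n} (P_tour n) xs"
  shows "xs \<in> {swap_even_pairs n, swap_odd_pairs n} \<or> (n \<in> {3, 4} \<and> precedes xs n 1)"
  using P_tour_ordering_eq_swap_pairs[OF assms long_edges_forward_P_tour[OF assms]]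
  by (metis insertCI)

lemma P_3_ordering_with_long_backedge:
  assumes M: "matching_ordering {1..3} (P_tour 3) xs" and "precedes xs 3 1"
  shows "xs = [3, 2, 1]"
proof -
  have D: "distinct xs" and S: "set xs = {1..3}"
    using M by (auto simp: matching_ordering_def is_ordering_def)
  have long: "(1, 3) \<in> backedges (P_tour 3) xs"
    using \<open>precedes xs 3 1\<close> by (simp add: backedge_iff P_tour_def)
  have "precedes xs 3 2"
  proof (rule ccontr)
    assume "\<not> precedes xs 3 2"
    then have "(3, 2) \<in> backedges (P_tour 3) xs"
      using precedes_total[of 2 xs 3] S by (auto simp: backedge_iff P_tour_def)
    from matching_ordering_backedges_eq[OF M long this, of 3] show False
      by simp
  qed
  moreover have "precedes xs 2 1"
  proof (rule ccontr)
    assume "\<not> precedes xs 2 1"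
    then have "(2, 1) \<in> backedges (P_tour 3) xs"
      using precedes_total[of 2 xs 1] S by (auto simp: backedge_iff P_tour_def)
    from matching_ordering_backedges_eq[OF M long this, of 1] show False
      by simp
  qed
  ultimately have "sorted_wrt (precedes xs) [3, 2, 1]"
    using \<open>precedes xs 3 1\<close> by simp
  moreover have "set [3, 2, 1] = set xs"
    unfolding S by auto
  ultimately show ?thesis
    using eq_if_sorted_wrt_precedes[OF D] by metis
qed

lemma P_4_ordering_with_long_backedge:
  assumes M: "matching_ordering {1..4} (P_tour 4) xs" and "precedes xs 4 1"
  shows "xs = [2, 4, 1, 3]"
proof -
  have D: "distinct xs" and S: "set xs = {1..4}"
    using M by (auto simp: matching_ordering_def is_ordering_def)
  have long: "(1, 4) \<in> backedges (P_tour 4) xs"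
    using \<open>precedes xs 4 1\<close> by (simp add: backedge_iff P_tour_def)
  have "precedes xs 2 4"
  proof (rule ccontr)
    assume "\<not> precedes xs 2 4"
    then have "(2, 4) \<in> backedges (P_tour 4) xs"
      using precedes_total[of 2 xs 4] S by (auto simp: backedge_iff P_tour_def)
    from matching_ordering_backedges_eq[OF M long this, of 4] show False
      by simp
  qed
  moreover have "precedes xs 1 3"
  proof (rule ccontr)
    assume "\<not> precedes xs 1 3"
    then have "(1, 3) \<in> backedges (P_tour 4) xs"
      using precedes_total[of 1 xs 3] S by (auto simp: backedge_iff P_tour_def)
    from matching_ordering_backedges_eq[OF M long this, of 1] show False
      by simp
  qed
  moreover note \<open>precedes xs 4 1\<close>
  ultimately have "sorted_wrt (precedes xs) [2, 4, 1, 3]"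
    using precedes_trans[OF D, of 2 4 1] precedes_trans[OF D, of 4 1 3] precedes_trans[OF D, of 2 1 3]
    by simp
  moreover have "set [2, 4, 1, 3] = set xs"
    unfolding S by auto
  ultimately show ?thesis
    using eq_if_sorted_wrt_precedes[OF D] by metis
qed

lemma matching_ordering_P_3: "matching_ordering {1..3} (P_tour 3) [3, 2, 1]"
proof (rule matching_orderingI)
  show "backedges (P_tour 3) [3, 2, 1] \<subseteq> {(1, 3)}"
    by (auto simp: backedge_iff P_tour_def)
qed (auto simp: is_ordering_def vertex_disjoint_def)

lemma matching_ordering_P_4: "matching_ordering {1..4} (P_tour 4) [2, 4, 1, 3]"
proof (rule matching_orderingI)
  show "backedges (P_tour 4) [2, 4, 1, 3] \<subseteq> {(1, 4), (3, 2)}"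
    by (auto simp: backedge_iff P_tour_def)
qed (auto simp: is_ordering_def vertex_disjoint_def)

lemma matching_orderings_P_tour:
  assumes "n \<noteq> 3" "n \<noteq> 4"
  shows "{xs. matching_ordering {1..n} (P_tour n) xs} = {swap_even_pairs n, swap_odd_pairs n}"
proof (intro equalityI subsetI)
  fix xs
  assume "xs \<in> {xs. matching_ordering {1..n} (P_tour n) xs}"
  then show "xs \<in> {swap_even_pairs n, swap_odd_pairs n}"
    using matching_ordering_P_tour_cases assms by blast
qed (use matching_ordering_swap_even_pairs matching_ordering_swap_odd_pairs in blast)

lemma matching_orderings_P_tour_3:
  "{xs. matching_ordering {1..3} (P_tour 3) xs} = {[1, 3, 2], [2, 1, 3], [3, 2, 1]}"
proof -
  have swaps: "swap_even_pairs 3 = [1, 3, 2]" "swap_odd_pairs 3 = [2, 1, 3]"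
    by (simp_all add: swap_even_pairs_def swap_even_key_def swap_odd_pairs_def swap_odd_key_def
        upt_rec)
  show ?thesis
  proof (intro equalityI subsetI)
    fix xs
    assume "xs \<in> {xs. matching_ordering {1..3} (P_tour 3) xs}"
    then have M: "matching_ordering {1..3} (P_tour 3) xs"
      by simp
    show "xs \<in> {[1, 3, 2], [2, 1, 3], [3, 2, 1]}"
      using matching_ordering_P_tour_cases[OF M] P_3_ordering_with_long_backedge[OF M]
      unfolding swaps by blast
  qed (use matching_ordering_P_3 matching_ordering_swap_even_pairs[of 3]
      matching_ordering_swap_odd_pairs[of 3] swaps in auto)
qed

lemma matching_orderings_P_tour_4:
  "{xs. matching_ordering {1..4} (P_tour 4) xs} = {[1, 3, 2, 4], [2, 1, 4, 3], [2, 4, 1, 3]}"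
proof -
  have swaps: "swap_even_pairs 4 = [1, 3, 2, 4]" "swap_odd_pairs 4 = [2, 1, 4, 3]"
    by (simp_all add: swap_even_pairs_def swap_even_key_def swap_odd_pairs_def swap_odd_key_def
        upt_rec)
  show ?thesis
  proof (intro equalityI subsetI)
    fix xs
    assume "xs \<in> {xs. matching_ordering {1..4} (P_tour 4) xs}"
    then have M: "matching_ordering {1..4} (P_tour 4) xs"
      by simp
    show "xs \<in> {[1, 3, 2, 4], [2, 1, 4, 3], [2, 4, 1, 3]}"
      using matching_ordering_P_tour_cases[OF M] P_4_ordering_with_long_backedge[OF M]
      unfolding swaps by blast
  qed (use matching_ordering_P_4 matching_ordering_swap_even_pairs[of 4]
      matching_ordering_swap_odd_pairs[of 4] swaps in auto)
qed

theorem corollary5p6: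
  shows "num_matching_orderings 1 = 1 \<and> num_matching_orderings 3 = 3 \<and>
         num_matching_orderings 4 = 3 \<and>
         (\<forall>n\<ge>2. n \<noteq> 3 \<and> n \<noteq> 4 \<longrightarrow> num_matching_orderings n = 2)"
proof -
  have "swap_even_pairs 1 = swap_odd_pairs 1"
    by (simp add: swap_even_pairs_def swap_odd_pairs_def)
  then have "num_matching_orderings 1 = 1"
    using matching_orderings_P_tour[of 1] by (simp add: num_matching_orderings_def)
  moreover have "num_matching_orderings 3 = 3" "num_matching_orderings 4 = 3"
    unfolding num_matching_orderings_def matching_orderings_P_tour_3 matching_orderings_P_tour_4
    by simp_all
  moreover have "num_matching_orderings n = 2" if "2 \<le> n" "n \<noteq> 3" "n \<noteq> 4" for n
    using matching_orderings_P_tour[OF that(2,3)] swap_even_pairs_ne_swap_odd_pairs[OF that(1)]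
    by (simp add: num_matching_orderings_def)
  ultimately show ?thesis
    by blast
qed

end
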